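(* Let $\alpha\in\mathbb{D}$, $\beta\in\mathbb{T}$, $\beta\neq1$, $\Psi_\alpha(z)=\frac{\alpha-z}{1-\overline{\alpha}z}$, $r_\beta(z)=\beta z$, $\varphi=\Psi_\alpha\circ r_\beta\circ\Psi_\alpha$, let $m\in\mathrm{Hol}(\mathbb{D})$, $m\not\equiv0$, and $T:\mathrm{Hol}(\mathbb{D})\to\mathrm{Hol}(\mathbb{D})$, $Tf=m\cdot(f\circ\varphi)$. If $m(z_0)=0$ for some $z_0\in\mathbb{D}$, then $\sigma_p(T)=\emptyset$ (whether $\varphi$ is periodic or aperiodic).
   Context: $\mathbb{D}$ is the open unit disc, $\mathbb{T}$ the unit circle, $\mathrm{Hol}(\mathbb{D})$ the space of holomorphic functions on $\mathbb{D}$. $\sigma_p(T)$ is the set of $\lambda\in\mathbb{C}$ such that $\lambda\mathrm{Id}-T$ is not injective. *)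

theory Defs
  imports "HOL-Complex_Analysis.Complex_Analysis"
begin

text \<open>Hol(D): functions holomorphic on the open unit disc; two functions are the same
element of Hol(D) iff they agree on the disc.\<close>

definition Psi :: "complex \<Rightarrow> complex \<Rightarrow> complex" where
  "Psi a z = (a - z) / (1 - cnj a * z)"

definition rot :: "complex \<Rightarrow> complex \<Rightarrow> complex" where
  "rot b z = b * z"

definition wcomp :: "(complex \<Rightarrow> complex) \<Rightarrow> (complex \<Rightarrow> complex) \<Rightarrow> (complex \<Rightarrow> complex) \<Rightarrow> (complex \<Rightarrow> complex)" where
  "wcomp m phi f = (\<lambda>z. m z * f (phi z))"

definition point_spectrum_Hol ::
  "((complex \<Rightarrow> complex) \<Rightarrow> (complex \<Rightarrow> complex)) \<Rightarrow> complex set" where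
  "point_spectrum_Hol T = {c. \<exists>f. f holomorphic_on ball 0 1 \<and> (\<exists>z\<in>ball 0 1. f z \<noteq> 0) \<and>
       (\<forall>z\<in>ball 0 1. T f z = c * f z)}"

end

theory Submission
  imports Defs
begin

(* Conjugating by the involution Psi \<alpha> turns T into the weighted composition operator
   with weight n = m o Psi \<alpha> and symbol the rotation w \<mapsto> \<beta> w, so an eigenfunction g with
   eigenvalue c satisfies c g(w) = n(w) g(\<beta> w).  If c = 0 then g = 0 because n is not
   identically zero.  If c \<noteq> 0, a zero w0 of n forces g to vanish identically:
   if \<beta>^N = 1, iterating gives (c^N - \<Prod>k<N. n(\<beta>^k w)) g(w) = 0 and the first factor is
   c^N \<noteq> 0 at w0; if w0 = 0, writing g(w) = w^k h(w) with h(0) \<noteq> 0 gives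
   c h(0) = n(0) \<beta>^k h(0) = 0; otherwise g vanishes at the infinitely many points
   w0 / \<beta>^k, which accumulate in the disc. *)

lemma holomorphic_mult_eq_0_imp_eq_0:
  fixes h k :: "complex \<Rightarrow> complex"
  assumes S: "open S" "connected S"
    and holo: "h holomorphic_on S" "k holomorphic_on S"
    and z: "z \<in> S" "h z \<noteq> 0"
    and prod0: "\<And>w. w \<in> S \<Longrightarrow> h w * k w = 0"
    and w: "w \<in> S"
  shows "k w = 0"
proof -
  define U where "U = h -` (- {0}) \<inter> S"
  have "open U"
    using S(1) holo(1) holomorphic_on_imp_continuous_on continuous_on_open_vimage
    unfolding U_def by blast
  moreover have "z \<in> U" "U \<subseteq> S"
    using z by (auto simp: U_def)
  moreover have "k u = 0" if "u \<in> U" for u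
    using prod0[of u] that by (auto simp: U_def)
  ultimately show ?thesis
    using analytic_continuation_open[of U S k "\<lambda>_. 0"] S holo(2) w by auto
qed

lemma mult_mem_ball_0:
  fixes \<beta> w :: complex
  assumes "norm \<beta> \<le> 1" "w \<in> ball 0 r"
  shows "\<beta> * w \<in> ball 0 r"
  using assms mult_left_le_one_le[of "norm w" "norm \<beta>"] by (simp add: norm_mult)

lemma holomorphic_on_compose_scaling:
  fixes f :: "complex \<Rightarrow> complex"
  assumes "f holomorphic_on ball 0 r" "norm \<beta> \<le> 1"
  shows "(\<lambda>w. f (\<beta> * w)) holomorphic_on ball 0 r"
  using holomorphic_on_compose_gen[of "\<lambda>w. \<beta> * w" "ball 0 r" f "ball 0 r"] assms
  by (auto intro: holomorphic_intros mult_mem_ball_0 simp: o_def)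

lemma inj_divide_power:
  fixes \<beta> w :: complex
  assumes "w \<noteq> 0" "\<beta> \<noteq> 0" and not_root_of_unity: "\<And>N. N > 0 \<Longrightarrow> \<beta> ^ N \<noteq> 1"
  shows "inj (\<lambda>k. w / \<beta> ^ k)"
proof -
  have "\<beta> ^ i \<noteq> \<beta> ^ j" if "i < j" for i j
  proof
    assume "\<beta> ^ i = \<beta> ^ j"
    then have "\<beta> ^ (j - i) = 1"
      using that assms(2) by (simp add: power_diff)
    then show False
      using not_root_of_unity[of "j - i"] that by simp
  qed
  then have "\<beta> ^ i \<noteq> \<beta> ^ j" if "i \<noteq> j" for i j
    using that by (metis linorder_neqE_nat)
  then show ?thesis
    using assms(1) by (intro injI) auto
qed

locale rotation_eigenfunction =
  fixes n g :: "complex \<Rightarrow> complex" and \<beta> c :: complex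
  assumes norm_rotation: "norm \<beta> = 1"
    and holomorphic_weight: "n holomorphic_on ball 0 1"
    and holomorphic_eigenfunction: "g holomorphic_on ball 0 1"
    and eigen_equation: "\<And>w. w \<in> ball 0 1 \<Longrightarrow> c * g w = n w * g (\<beta> * w)"
begin

lemma rotation_nonzero: "\<beta> \<noteq> 0"
  using norm_rotation by auto

lemma rotate_mem_ball: "w \<in> ball 0 r \<Longrightarrow> \<beta> ^ k * w \<in> ball 0 r"
  by (rule mult_mem_ball_0) (simp_all add: norm_power norm_rotation)

lemma vanishes_if_eigenvalue_zero:
  assumes "c = 0" "z \<in> ball 0 1" "n z \<noteq> 0" "w \<in> ball 0 1"
  shows "g w = 0"
proof -
  have "w / \<beta> \<in> ball 0 1"
    using assms(4) by (simp add: norm_divide norm_rotation)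
  moreover have "n u * g (\<beta> * u) = 0" if "u \<in> ball 0 1" for u
    using eigen_equation[OF that] assms(1) by simp
  ultimately have "g (\<beta> * (w / \<beta>)) = 0"
    using holomorphic_mult_eq_0_imp_eq_0[OF open_ball connected_ball holomorphic_weight
        holomorphic_on_compose_scaling[of g 1 \<beta>] assms(2,3), of "w / \<beta>"]
      holomorphic_eigenfunction norm_rotation by simp
  then show ?thesis
    using rotation_nonzero by simp
qed

lemma eigen_equation_iterate:
  assumes "w \<in> ball 0 1"
  shows "c ^ j * g w = (\<Prod>k<j. n (\<beta> ^ k * w)) * g (\<beta> ^ j * w)"
proof (induction j)
  case 0
  then show ?case by simp
next
  case (Suc j)
  have "c ^ Suc j * g w = (\<Prod>k<j. n (\<beta> ^ k * w)) * (c * g (\<beta> ^ j * w))"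
    using Suc by (simp add: algebra_simps)
  also have "\<dots> = (\<Prod>k<Suc j. n (\<beta> ^ k * w)) * g (\<beta> ^ Suc j * w)"
    using eigen_equation[OF rotate_mem_ball[OF assms]] by (simp add: algebra_simps)
  finally show ?case .
qed

lemma vanishes_if_periodic:
  assumes "c \<noteq> 0" "N > 0" "\<beta> ^ N = 1"
    and "w0 \<in> ball 0 1" "n w0 = 0" "w \<in> ball 0 1"
  shows "g w = 0"
proof (rule holomorphic_mult_eq_0_imp_eq_0[OF open_ball connected_ball _ holomorphic_eigenfunction])
  have "(\<lambda>w. n (\<beta> ^ k * w)) holomorphic_on ball 0 1" for k
    by (rule holomorphic_on_compose_scaling) (simp_all add: holomorphic_weight norm_power norm_rotation)
  then show "(\<lambda>w. c ^ N - (\<Prod>k<N. n (\<beta> ^ k * w))) holomorphic_on ball 0 1"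
    by (intro holomorphic_intros)
  show "c ^ N - (\<Prod>k<N. n (\<beta> ^ k * w0)) \<noteq> 0"
    using assms by (subst prod_zero) (auto intro!: bexI[of _ 0])
  show "(c ^ N - (\<Prod>k<N. n (\<beta> ^ k * z))) * g z = 0" if "z \<in> ball 0 1" for z
    using eigen_equation_iterate[OF that, of N] assms(3) by (simp add: algebra_simps)
qed (use assms in auto)

lemma vanishes_if_zero_at_origin:
  assumes "c \<noteq> 0" "n 0 = 0" "w \<in> ball 0 1"
  shows "g w = 0"
proof (rule ccontr)
  assume "g w \<noteq> 0"
  moreover have "g 0 = 0"
    using eigen_equation[of 0] assms(1,2) by simp
  ultimately have nonconstant: "\<not> g constant_on ball 0 1"
    using assms(3) unfolding constant_on_def by (metis mem_ball_0 norm_zero zero_less_one)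
  show False
  proof (rule holomorphic_factor_zero_nonconstant[OF holomorphic_eigenfunction open_ball connected_ball
        centre_in_ball[THEN iffD2, OF zero_less_one] \<open>g 0 = 0\<close> nonconstant])
    fix h :: "complex \<Rightarrow> complex" and r :: real and k :: nat
    assume k: "0 < k" "0 < r" "ball 0 r \<subseteq> (ball 0 1 :: complex set)"
      and h: "h holomorphic_on ball 0 r"
      and factor: "\<And>w. w \<in> ball 0 r \<Longrightarrow> g w = (w - 0) ^ k * h w"
      and h_nonzero: "\<And>w. w \<in> ball 0 r \<Longrightarrow> h w \<noteq> 0"
    define F where "F w = c * h w - n w * \<beta> ^ k * h (\<beta> * w)" for w
    have F_zero: "F w = 0" if "w \<in> ball 0 r - {0}" for w
    proof -
      have "w \<in> ball 0 1"
        using that k(3) by blast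
      then have "c * g w = n w * g (\<beta> * w)"
        by (rule eigen_equation)
      moreover have "\<beta> * w \<in> ball 0 r"
        using that rotate_mem_ball[of w r 1] by simp
      ultimately have "c * (w ^ k * h w) = n w * ((\<beta> * w) ^ k * h (\<beta> * w))"
        using factor[of w] factor[of "\<beta> * w"] that by simp
      then have "w ^ k * (c * h w) = w ^ k * (n w * \<beta> ^ k * h (\<beta> * w))"
        by (simp add: power_mult_distrib mult_ac)
      then show ?thesis
        using that by (simp add: F_def)
    qed
    have F_holomorphic: "F holomorphic_on ball 0 r"
    proof -
      have "(\<lambda>w. h (\<beta> * w)) holomorphic_on ball 0 r"
        by (rule holomorphic_on_compose_scaling[OF h]) (simp add: norm_rotation)
      moreover have "n holomorphic_on ball 0 r"
        using holomorphic_on_subset[OF holomorphic_weight k(3)] .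
      ultimately show ?thesis
        unfolding F_def using h by (intro holomorphic_intros)
    qed
    have "of_real (r / 2) \<in> ball (0 :: complex) r - {0}"
      using k(2) by simp
    then have "ball 0 r - {0 :: complex} \<noteq> {}"
      by blast
    then have "F 0 = 0"
      using analytic_continuation_open[of "ball 0 r - {0}" "ball 0 r" F "\<lambda>_. 0" 0]
        F_zero F_holomorphic k(2) by (simp add: open_delete)
    then have "c * h 0 = 0"
      using assms(2) by (simp add: F_def)
    then show False
      using assms(1) h_nonzero[of 0] k(2) by simp
  qed
qed

lemma vanishes_on_backward_orbit:
  assumes "c \<noteq> 0" "w0 \<in> ball 0 1" "n w0 = 0"
  shows "g (w0 / \<beta> ^ k) = 0"
proof (induction k)
  case 0
  then show ?case
    using eigen_equation[OF assms(2)] assms by simp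
next
  case (Suc k)
  have "w0 / \<beta> ^ Suc k \<in> ball 0 1"
    using assms(2) by (simp add: norm_divide norm_power norm_rotation del: power_Suc)
  moreover have "\<beta> * (w0 / \<beta> ^ Suc k) = w0 / \<beta> ^ k"
    using rotation_nonzero by (simp add: field_simps)
  ultimately show ?case
    using eigen_equation[of "w0 / \<beta> ^ Suc k"] Suc assms(1) by simp
qed

lemma vanishes_if_not_root_of_unity:
  assumes "c \<noteq> 0" "\<And>N. N > 0 \<Longrightarrow> \<beta> ^ N \<noteq> 1"
    and "w0 \<in> ball 0 1" "w0 \<noteq> 0" "n w0 = 0" "w \<in> ball 0 1"
  shows "g w = 0"
proof -
  let ?orbit = "range (\<lambda>k. w0 / \<beta> ^ k)"
  have "infinite ?orbit"
    using range_inj_infinite inj_divide_power assms(2,4) rotation_nonzero by blast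
  moreover have orbit_circle: "?orbit \<subseteq> cball 0 (norm w0)"
    by (auto simp: norm_divide norm_power norm_rotation)
  ultimately obtain \<xi> where "\<xi> \<in> cball 0 (norm w0)" "\<xi> islimpt ?orbit"
    using compact_eq_Bolzano_Weierstrass[of "cball 0 (norm w0)"] compact_cball by blast
  moreover have "cball 0 (norm w0) \<subseteq> ball 0 1"
    using assms(3) by auto
  ultimately show ?thesis
    using analytic_continuation[OF holomorphic_eigenfunction open_ball connected_ball _ _ _ _ assms(6)]
      orbit_circle vanishes_on_backward_orbit[OF assms(1,3,5)] by blast
qed

lemma vanishes:
  assumes "z \<in> ball 0 1" "n z \<noteq> 0" "w0 \<in> ball 0 1" "n w0 = 0" "w \<in> ball 0 1"
  shows "g w = 0"
proof (cases "c = 0")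
  case True
  then show ?thesis
    using vanishes_if_eigenvalue_zero assms by blast
next
  case False
  consider "\<exists>N>0. \<beta> ^ N = 1" | "w0 = 0" | "\<And>N. N > 0 \<Longrightarrow> \<beta> ^ N \<noteq> 1" "w0 \<noteq> 0"
    by blast
  then show ?thesis
    by cases (use False assms vanishes_if_periodic vanishes_if_zero_at_origin
        vanishes_if_not_root_of_unity in blast)+
qed

end

lemma point_spectrum_Hol_wcomp_rot:
  assumes "norm \<beta> = 1" "n holomorphic_on ball 0 1"
    and "z \<in> ball 0 1" "n z \<noteq> 0" "w0 \<in> ball 0 1" "n w0 = 0"
  shows "point_spectrum_Hol (wcomp n (rot \<beta>)) = {}"
proof -
  have False if "g holomorphic_on ball 0 1" "w \<in> ball 0 1" "g w \<noteq> 0"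
    and "\<forall>w\<in>ball 0 1. wcomp n (rot \<beta>) g w = c * g w" for g w c
  proof -
    interpret rotation_eigenfunction n g \<beta> c
      using assms that by unfold_locales (auto simp: wcomp_def rot_def)
    show False
      using vanishes assms that by blast
  qed
  then show ?thesis
    unfolding point_spectrum_Hol_def by blast
qed

lemma point_spectrum_Hol_wcomp_conj_subset:
  assumes holo: "\<psi> holomorphic_on ball 0 1"
    and maps: "\<psi> ` ball 0 1 \<subseteq> ball 0 1"
    and involution: "\<And>z. z \<in> ball 0 1 \<Longrightarrow> \<psi> (\<psi> z) = z"
  shows "point_spectrum_Hol (wcomp m (\<psi> \<circ> \<phi> \<circ> \<psi>)) \<subseteq> point_spectrum_Hol (wcomp (m \<circ> \<psi>) \<phi>)"
proof
  fix c assume "c \<in> point_spectrum_Hol (wcomp m (\<psi> \<circ> \<phi> \<circ> \<psi>))"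
  then obtain f z where f: "f holomorphic_on ball 0 1" "z \<in> ball 0 1" "f z \<noteq> 0"
    and eigen: "\<And>z. z \<in> ball 0 1 \<Longrightarrow> m z * f (\<psi> (\<phi> (\<psi> z))) = c * f z"
    unfolding point_spectrum_Hol_def wcomp_def by auto
  have "f \<circ> \<psi> holomorphic_on ball 0 1"
    using holomorphic_on_compose_gen[OF holo f(1) maps] .
  moreover have "\<psi> z \<in> ball 0 1" "(f \<circ> \<psi>) (\<psi> z) \<noteq> 0"
    using f involution maps by (blast, simp)
  moreover have "wcomp (m \<circ> \<psi>) \<phi> (f \<circ> \<psi>) w = c * (f \<circ> \<psi>) w" if "w \<in> ball 0 1" for w
  proof -
    have "\<psi> w \<in> ball 0 1"
      using maps that by blast
    then show ?thesis
      using eigen[of "\<psi> w"] involution[OF that] by (simp add: wcomp_def)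
  qed
  ultimately show "c \<in> point_spectrum_Hol (wcomp (m \<circ> \<psi>) \<phi>)"
    unfolding point_spectrum_Hol_def by blast
qed

lemma Psi_eq_Moebius_function: "Psi a z = - Moebius_function 0 a z"
  by (simp add: Psi_def Moebius_function_simple minus_divide_left)

lemma Psi_mem_ball: "a \<in> ball 0 1 \<Longrightarrow> z \<in> ball 0 1 \<Longrightarrow> Psi a z \<in> ball 0 1"
  using Moebius_function_norm_lt_1[of a z 0] by (simp add: Psi_eq_Moebius_function)

lemma holomorphic_on_Psi: "a \<in> ball 0 1 \<Longrightarrow> Psi a holomorphic_on ball 0 1"
  using Moebius_function_holomorphic[of a 0]
  by (simp add: Psi_eq_Moebius_function[abs_def] holomorphic_on_minus)

lemma Psi_Psi:
  assumes "a \<in> ball 0 1" "z \<in> ball 0 1"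
  shows "Psi a (Psi a z) = z"
proof -
  have "norm (cnj a * w) < 1" if "w \<in> ball 0 1" for w
    using assms(1) that norm_mult_less[of "cnj a" 1 w 1] by simp
  then have d: "1 - cnj a * z \<noteq> 0" and e: "1 - cnj a * a \<noteq> 0"
    using assms by (metis eq_iff_diff_eq_0 norm_one less_irrefl)+
  have "Psi a (Psi a z) = (z * (1 - cnj a * a)) / (1 - cnj a * a)"
    using d by (simp add: Psi_def divide_simps) (simp add: algebra_simps)
  also have "\<dots> = z"
    using e by simp
  finally show ?thesis .
qed

theorem theorem8p2:
  fixes \<alpha> \<beta> :: complex and m :: "complex \<Rightarrow> complex"
  assumes "\<alpha> \<in> ball 0 1"
    and "norm \<beta> = 1" and "\<beta> \<noteq> 1"
    and "m holomorphic_on ball 0 1"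
    and "\<exists>z\<in>ball 0 1. m z \<noteq> 0"
    and "\<exists>z0\<in>ball 0 1. m z0 = 0"
  shows "point_spectrum_Hol (wcomp m (Psi \<alpha> \<circ> rot \<beta> \<circ> Psi \<alpha>)) = {}"
proof -
  obtain z z0 where z: "z \<in> ball 0 1" "m z \<noteq> 0" and z0: "z0 \<in> ball 0 1" "m z0 = 0"
    using assms(5,6) by blast
  have maps: "Psi \<alpha> ` ball 0 1 \<subseteq> ball 0 1"
    using Psi_mem_ball[OF assms(1)] by blast
  have "point_spectrum_Hol (wcomp (m \<circ> Psi \<alpha>) (rot \<beta>)) = {}"
  proof (rule point_spectrum_Hol_wcomp_rot[OF assms(2)])
    show "m \<circ> Psi \<alpha> holomorphic_on ball 0 1"
      using holomorphic_on_compose_gen[OF holomorphic_on_Psi[OF assms(1)] assms(4) maps] .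
    show "Psi \<alpha> z \<in> ball 0 1" "(m \<circ> Psi \<alpha>) (Psi \<alpha> z) \<noteq> 0"
      "Psi \<alpha> z0 \<in> ball 0 1" "(m \<circ> Psi \<alpha>) (Psi \<alpha> z0) = 0"
      using z z0 Psi_mem_ball[OF assms(1)] Psi_Psi[OF assms(1)] by auto
  qed
  then show ?thesis
    using point_spectrum_Hol_wcomp_conj_subset[OF holomorphic_on_Psi[OF assms(1)] maps
        Psi_Psi[OF assms(1)]] by blast
qed

end
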